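(* Suppose there exists an (integer) $\mathrm{H}_t(m,n;s,k)$. Let $\alpha_1,\alpha_2,\lambda_1,\lambda_2$ be positive integers with $\alpha_1\le\lambda_2$, $\alpha_2\le\lambda_1$, $\alpha_1\lambda_1=\alpha_2\lambda_2$, $\alpha_1 s\le\lambda_2 n$ and $\alpha_2 k\le\lambda_1 m$. Then there exists an (integer) ${}^{\alpha_1\lambda_1}\mathrm{H}_t(\lambda_1 m,\lambda_2 n;\alpha_1 s,\alpha_2 k)$.
   Context: For positive integers $m,n,s,k,\lambda,t$ with $t$ dividing $\frac{2nk}{\lambda}$, let $v=\frac{2nk}{\lambda}+t$ and $J$ the subgroup of $\mathbb{Z}_v$ of order $t$. A ${}^\lambda\mathrm{H}_t(m,n;s,k)$ is an $m\times n$ partially filled array with entries in $\mathbb{Z}_v$ such that: (a) each row has exactly $s$ and each column exactly $k$ filled cells; (b) the multiset $\{\pm x: x$ an entry of a filled cell$\}$ contains each element of $\mathbb{Z}_v\setminus J$ exactly $\lambda$ times and no element of $J$; (c) every row and every column sums to $0$ in $\mathbb{Z}_v$. For $\lambda=1$ it is written $\mathrm{H}_t(m,n;s,k)$. The array is integer if, representing each entry by its integer representative in $\pm\{1,\dots,\lfloor v/2\rfloor\}$, every row and every column sums to $0$ in $\mathbb{Z}$. *)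

theory Defs
  imports Main
begin

text \<open>A partially filled m x n array is a map A :: nat => nat => int option;
  cell (i,j) is filled iff A i j = Some x (we require filled cells to lie in
  rows < m and columns < n).  Entries are integers, read as elements of Z_v
  via reduction mod v.\<close>

definition heff_v :: "nat \<Rightarrow> nat \<Rightarrow> nat \<Rightarrow> nat \<Rightarrow> nat" where
  "heff_v lam t n k = 2 * n * k div lam + t"

definition cellval :: "(nat \<Rightarrow> nat \<Rightarrow> int option) \<Rightarrow> nat \<Rightarrow> nat \<Rightarrow> int" where
  "cellval A i j = (case A i j of None \<Rightarrow> 0 | Some x \<Rightarrow> x)"

text \<open>lambda-H_t(m,n;s,k) over Z_v, v = 2nk/lambda + t; J = subgroup of order t
  = multiples of v/t.\<close>
definition heffter ::
  "nat \<Rightarrow> nat \<Rightarrow> nat \<Rightarrow> nat \<Rightarrow> nat \<Rightarrow> nat \<Rightarrow> (nat \<Rightarrow> nat \<Rightarrow> int option) \<Rightarrow> bool" where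
  "heffter lam t m n s k A \<longleftrightarrow>
     (let v = heff_v lam t n k in
      lam dvd 2 * n * k \<and> t dvd (2 * n * k div lam) \<and>
      (\<forall>i j. A i j \<noteq> None \<longrightarrow> i < m \<and> j < n) \<and>
      (\<forall>i<m. card {j. j < n \<and> A i j \<noteq> None} = s) \<and>
      (\<forall>j<n. card {i. i < m \<and> A i j \<noteq> None} = k) \<and>
      (\<forall>r \<in> {0..<int v}.
          card {(i, j). i < m \<and> j < n \<and> (\<exists>x. A i j = Some x \<and> x mod int v = r)}
        + card {(i, j). i < m \<and> j < n \<and> (\<exists>x. A i j = Some x \<and> (- x) mod int v = r)}
        = (if int (v div t) dvd r then 0 else lam)) \<and>
      (\<forall>i<m. (\<Sum>j<n. cellval A i j) mod int v = 0) \<and>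
      (\<forall>j<n. (\<Sum>i<m. cellval A i j) mod int v = 0))"

definition integer_heffter ::
  "nat \<Rightarrow> nat \<Rightarrow> nat \<Rightarrow> nat \<Rightarrow> nat \<Rightarrow> nat \<Rightarrow> (nat \<Rightarrow> nat \<Rightarrow> int option) \<Rightarrow> bool" where
  "integer_heffter lam t m n s k A \<longleftrightarrow>
     heffter lam t m n s k A \<and>
     (\<forall>i j x. A i j = Some x \<longrightarrow> 1 \<le> \<bar>x\<bar> \<and> \<bar>x\<bar> \<le> int (heff_v lam t n k div 2)) \<and>
     (\<forall>i<m. (\<Sum>j<n. cellval A i j) = 0) \<and>
     (\<forall>j<n. (\<Sum>i<m. cellval A i j) = 0)"

end

theory Submission
  imports Defs "HOL-Number_Theory.Cong"
begin

text \<open>Take a 0/1 pattern with \<open>l\<^sub>1\<close> rows and \<open>l\<^sub>2\<close> columns in which every row has \<open>\<alpha>\<^sub>1\<close>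
  ones and every column \<open>\<alpha>\<^sub>2\<close> ones, and replace each one by a copy of the given
  \<open>H\<^sub>t(m,n;s,k)\<close> and each zero by an empty \<open>m \<times> n\<close> block.  Every row of the result
  meets \<open>\<alpha>\<^sub>1\<close> copies of a row of the original and every column \<open>\<alpha>\<^sub>2\<close> copies of a
  column, so row and column sums stay \<open>0\<close> (in \<open>\<int>\<^sub>v\<close> or in \<open>\<int>\<close>), and every entry
  occurs \<open>\<alpha>\<^sub>1 \<lambda>\<^sub>1 = \<alpha>\<^sub>2 \<lambda>\<^sub>2\<close> times, which is exactly the multiplicity required since
  \<open>v = 2(\<lambda>\<^sub>2 n)(\<alpha>\<^sub>2 k)/(\<alpha>\<^sub>1 \<lambda>\<^sub>1) + t = 2nk + t\<close> is unchanged.  Such a pattern exists as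
  soon as \<open>\<alpha>\<^sub>1 \<le> \<lambda>\<^sub>2\<close>: write \<open>0, 1, \<dots>, \<alpha>\<^sub>1 \<lambda>\<^sub>1 - 1\<close> into the rows, \<open>\<alpha>\<^sub>1\<close> numbers per
  row, placing \<open>p\<close> in column \<open>p mod \<lambda>\<^sub>2\<close>.\<close>

lemma bij_betw_div_mod:
  fixes n :: nat
  assumes "0 < n"
  shows "bij_betw (\<lambda>x. (x div n, x mod n)) {..<l * n} ({..<l} \<times> {..<n})"
proof (rule bij_betw_byWitness[where f' = "\<lambda>(J, j). J * n + j"])
  show "(\<lambda>x. (x div n, x mod n)) ` {..<l * n} \<subseteq> {..<l} \<times> {..<n}"
    using assms by (auto simp: less_mult_imp_div_less)
  have "J * n + j < l * n" if "J < l" "j < n" for J j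
  proof -
    have "J * n + j < Suc J * n" using that by simp
    also have "\<dots> \<le> l * n" using that by (intro mult_right_mono) auto
    finally show ?thesis .
  qed
  then show "(\<lambda>(J, j). J * n + j) ` ({..<l} \<times> {..<n}) \<subseteq> {..<l * n}" by auto
qed (use assms in auto)

lemma sum_lessThan_mult_blocks:
  fixes n :: nat
  assumes "0 < n"
  shows "(\<Sum>x<l * n. f x) = (\<Sum>J<l. \<Sum>j<n. f (J * n + j))"
proof -
  have "(\<Sum>x<l * n. f x) = (\<Sum>x<l * n. (\<lambda>(J, j). f (J * n + j)) (x div n, x mod n))"
    by simp
  also have "\<dots> = (\<Sum>(J, j)\<in>{..<l} \<times> {..<n}. f (J * n + j))"
    by (rule sum.reindex_bij_betw[OF bij_betw_div_mod[OF assms]])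
  finally show ?thesis by (simp add: sum.cartesian_product)
qed

lemma card_Collect_bij_betw:
  assumes "bij_betw f A B"
  shows "card {x\<in>A. P (f x)} = card {y\<in>B. P y}"
  by (rule bij_betw_same_card, rule bij_betw_Collect[OF assms]) simp

lemma card_lessThan_mult_div_mod:
  fixes n :: nat
  assumes "0 < n"
  shows "card {x. x < l * n \<and> P (x div n) \<and> Q (x mod n)}
       = card {J. J < l \<and> P J} * card {j. j < n \<and> Q j}"
proof -
  have "card {x. x < l * n \<and> P (x div n) \<and> Q (x mod n)}
      = card {x\<in>{..<l * n}. (\<lambda>(J, j). P J \<and> Q j) (x div n, x mod n)}"
    by simp
  also have "\<dots> = card {y\<in>{..<l} \<times> {..<n}. (\<lambda>(J, j). P J \<and> Q j) y}"
    by (rule card_Collect_bij_betw[OF bij_betw_div_mod[OF assms]])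
  also have "{y\<in>{..<l} \<times> {..<n}. (\<lambda>(J, j). P J \<and> Q j) y}
      = {J. J < l \<and> P J} \<times> {j. j < n \<and> Q j}"
    by auto
  finally show ?thesis by (simp add: card_cartesian_product)
qed

lemma card_lessThan_mult_div_mod2:
  fixes m n :: nat
  assumes "0 < m" "0 < n"
  shows "card {(i, j). i < l1 * m \<and> j < l2 * n \<and> P (i div m) (j div n) \<and> Q (i mod m) (j mod n)}
       = card {(I, J). I < l1 \<and> J < l2 \<and> P I J} * card {(i, j). i < m \<and> j < n \<and> Q i j}"
proof -
  let ?blocks = "\<lambda>(i, j). ((i div m, j div n), (i mod m, j mod n))"
  let ?R = "\<lambda>((I, J), (i, j)). P I J \<and> Q i j"
  have "bij_betw ?blocks ({..<l1 * m} \<times> {..<l2 * n}) (({..<l1} \<times> {..<l2}) \<times> ({..<m} \<times> {..<n}))"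
  proof -
    have "bij_betw (map_prod (\<lambda>x. (x div m, x mod m)) (\<lambda>x. (x div n, x mod n)))
        ({..<l1 * m} \<times> {..<l2 * n}) (({..<l1} \<times> {..<m}) \<times> ({..<l2} \<times> {..<n}))"
      by (intro bij_betw_map_prod bij_betw_div_mod assms)
    moreover have "bij_betw (\<lambda>((I, i), (J, j)). ((I, J), (i, j)))
        (({..<l1} \<times> {..<m}) \<times> ({..<l2} \<times> {..<n})) (({..<l1} \<times> {..<l2}) \<times> ({..<m} \<times> {..<n}))"
      by (rule bij_betw_byWitness[where f' = "\<lambda>((I, J), (i, j)). ((I, i), (J, j))"]) auto
    ultimately show ?thesis by (auto dest: bij_betw_trans simp: o_def split_def)
  qed
  then have "card {p\<in>{..<l1 * m} \<times> {..<l2 * n}. ?R (?blocks p)}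
      = card {y\<in>({..<l1} \<times> {..<l2}) \<times> ({..<m} \<times> {..<n}). ?R y}"
    by (rule card_Collect_bij_betw)
  moreover have "{p\<in>{..<l1 * m} \<times> {..<l2 * n}. ?R (?blocks p)}
      = {(i, j). i < l1 * m \<and> j < l2 * n \<and> P (i div m) (j div n) \<and> Q (i mod m) (j mod n)}"
    by auto
  moreover have "{y\<in>({..<l1} \<times> {..<l2}) \<times> ({..<m} \<times> {..<n}). ?R y}
      = {(I, J). I < l1 \<and> J < l2 \<and> P I J} \<times> {(i, j). i < m \<and> j < n \<and> Q i j}"
    by auto
  ultimately show ?thesis by (simp add: card_cartesian_product)
qed

definition regular_pattern :: "nat \<Rightarrow> nat \<Rightarrow> nat \<Rightarrow> nat \<Rightarrow> (nat \<Rightarrow> nat \<Rightarrow> bool) \<Rightarrow> bool" where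
  "regular_pattern l1 l2 a1 a2 F \<longleftrightarrow>
     (\<forall>I J. F I J \<longrightarrow> I < l1 \<and> J < l2) \<and>
     (\<forall>I<l1. card {J. F I J} = a1) \<and> (\<forall>J<l2. card {I. F I J} = a2)"

lemma card_regular_pattern:
  assumes "regular_pattern l1 l2 a1 a2 F"
  shows "card {(I, J). F I J} = a1 * l1" and "card {(I, J). F I J} = a2 * l2"
proof -
  note pattern = assms[unfolded regular_pattern_def]
  have fin: "finite {J. F I J}" "finite {I. F I J}" for I J
    using pattern by (auto intro: finite_subset[of _ "{..<l1}"] finite_subset[of _ "{..<l2}"])
  have "{(I, J). F I J} = Sigma {..<l1} (\<lambda>I. {J. F I J})"
    using pattern by auto
  also have "card \<dots> = (\<Sum>I<l1. a1)"
    using pattern fin by simp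
  finally show "card {(I, J). F I J} = a1 * l1" by simp
  have "{(I, J). F I J} = prod.swap ` Sigma {..<l2} (\<lambda>J. {I. F I J})"
    using pattern by auto
  also have "card \<dots> = (\<Sum>J<l2. a2)"
    using pattern fin by (simp add: card_image)
  finally show "card {(I, J). F I J} = a2 * l2" by simp
qed

definition cyclic_pattern :: "nat \<Rightarrow> nat \<Rightarrow> nat \<Rightarrow> nat \<Rightarrow> nat \<Rightarrow> bool" where
  "cyclic_pattern l1 l2 a I J \<longleftrightarrow> (\<exists>p < l1 * a. I = p div a \<and> J = p mod l2)"

lemma inj_div_mod_pair:
  fixes a l :: nat
  assumes "0 < a" "a \<le> l"
  shows "inj (\<lambda>p. (p div a, p mod l))"
proof (rule injI)
  fix p q assume "(p div a, p mod l) = (q div a, q mod l)"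
  then have div_eq: "p div a = q div a" and cong: "[p = q] (mod l)"
    by (simp_all add: cong_def)
  from cong have "[p div a * a + p mod a = q div a * a + q mod a] (mod l)"
    by (simp only: div_mult_mod_eq)
  then have "[p mod a = q mod a] (mod l)"
    by (simp only: div_eq cong_add_lcancel_nat)
  moreover have "p mod a < l" "q mod a < l"
    using assms by (meson mod_less_divisor order.strict_trans2)+
  ultimately have "p mod a = q mod a"
    by (rule cong_less_modulus_unique_nat)
  with div_eq show "p = q" by (metis div_mult_mod_eq)
qed

lemma regular_pattern_cyclic_pattern:
  fixes l1 l2 a1 a2 :: nat
  assumes "0 < a1" "a1 \<le> l2" "a1 * l1 = a2 * l2"
  shows "regular_pattern l1 l2 a1 a2 (cyclic_pattern l1 l2 a1)"
proof -
  have "0 < l2" using assms by simp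
  have size_eq: "l1 * a1 = a2 * l2"
    using assms(3) by (simp add: mult.commute)
  have inj: "inj (\<lambda>p. (p div a1, p mod l2))"
    by (rule inj_div_mod_pair[OF assms(1,2)])
  have row: "card {J. cyclic_pattern l1 l2 a1 I J} = a1" if "I < l1" for I
  proof -
    let ?row = "{p. p < l1 * a1 \<and> p div a1 = I \<and> True}"
    have "{J. cyclic_pattern l1 l2 a1 I J} = (\<lambda>p. p mod l2) ` ?row"
      unfolding cyclic_pattern_def by blast
    moreover have "inj_on (\<lambda>p. p mod l2) ?row"
      by (rule inj_onI, rule injD[OF inj]) auto
    moreover have "card ?row = card {I'. I' < l1 \<and> I' = I} * card {c. c < a1 \<and> True}"
      by (rule card_lessThan_mult_div_mod[OF assms(1), of l1 "\<lambda>I'. I' = I" "\<lambda>_. True"])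
    moreover have "{I'. I' < l1 \<and> I' = I} = {I}"
      using that by auto
    ultimately show ?thesis by (simp add: card_image)
  qed
  have col: "card {I. cyclic_pattern l1 l2 a1 I J} = a2" if "J < l2" for J
  proof -
    let ?col = "{p. p < a2 * l2 \<and> True \<and> p mod l2 = J}"
    have "{I. cyclic_pattern l1 l2 a1 I J} = (\<lambda>p. p div a1) ` ?col"
      unfolding cyclic_pattern_def size_eq by blast
    moreover have "inj_on (\<lambda>p. p div a1) ?col"
      by (rule inj_onI, rule injD[OF inj]) auto
    moreover have "card ?col = card {q. q < a2 \<and> True} * card {j. j < l2 \<and> j = J}"
      by (rule card_lessThan_mult_div_mod[OF \<open>0 < l2\<close>, of a2 "\<lambda>_. True" "\<lambda>j. j = J"])
    moreover have "{j. j < l2 \<and> j = J} = {J}"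
      using that by auto
    ultimately show ?thesis by (simp add: card_image)
  qed
  have "cyclic_pattern l1 l2 a1 I J \<Longrightarrow> I < l1 \<and> J < l2" for I J
    using \<open>0 < l2\<close> by (auto simp: cyclic_pattern_def less_mult_imp_div_less)
  with row col show ?thesis by (simp add: regular_pattern_def)
qed

lemma heff_v_inflate:
  assumes "0 < a * l"
  shows "heff_v (a * l * lam) t (l * n) (a * k) = heff_v lam t n k"
proof -
  have "2 * (l * n) * (a * k) = a * l * (2 * n * k)" by (simp add: ac_simps)
  with assms show ?thesis by (simp add: heff_v_def mult.assoc)
qed

definition kronecker_pattern ::
  "(nat \<Rightarrow> nat \<Rightarrow> bool) \<Rightarrow> nat \<Rightarrow> nat \<Rightarrow> (nat \<Rightarrow> nat \<Rightarrow> int option) \<Rightarrow> nat \<Rightarrow> nat \<Rightarrow> int option" where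
  "kronecker_pattern F m n A i j = (if F (i div m) (j div n) then A (i mod m) (j mod n) else None)"

context
  fixes l1 l2 a1 a2 m n :: nat and F :: "nat \<Rightarrow> nat \<Rightarrow> bool" and A :: "nat \<Rightarrow> nat \<Rightarrow> int option"
  assumes pattern: "regular_pattern l1 l2 a1 a2 F"
    and m_pos: "0 < m" and n_pos: "0 < n"
begin

lemma card_pattern_row:
  assumes "I < l1"
  shows "card {J. J < l2 \<and> F I J} = a1"
proof -
  have "{J. J < l2 \<and> F I J} = {J. F I J}"
    using pattern by (auto simp: regular_pattern_def)
  with assms pattern show ?thesis by (simp add: regular_pattern_def)
qed

lemma card_pattern_col:
  assumes "J < l2"
  shows "card {I. I < l1 \<and> F I J} = a2"
proof -
  have "{I. I < l1 \<and> F I J} = {I. F I J}"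
    using pattern by (auto simp: regular_pattern_def)
  with assms pattern show ?thesis by (simp add: regular_pattern_def)
qed

lemma kronecker_pattern_filled_bounds:
  assumes "kronecker_pattern F m n A i j \<noteq> None"
  shows "i < l1 * m" and "j < l2 * n"
proof -
  have "F (i div m) (j div n)"
    using assms by (auto simp: kronecker_pattern_def split: if_splits)
  then have "i div m < l1" "j div n < l2"
    using pattern by (auto simp: regular_pattern_def)
  then show "i < l1 * m" "j < l2 * n"
    using m_pos n_pos by (simp_all add: div_less_iff_less_mult)
qed

lemma card_row_kronecker_pattern:
  assumes "i < l1 * m"
  shows "card {j. j < l2 * n \<and> kronecker_pattern F m n A i j \<noteq> None}
       = a1 * card {j. j < n \<and> A (i mod m) j \<noteq> None}"
proof -
  have "{j. j < l2 * n \<and> kronecker_pattern F m n A i j \<noteq> None}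
      = {j. j < l2 * n \<and> F (i div m) (j div n) \<and> A (i mod m) (j mod n) \<noteq> None}"
    by (auto simp: kronecker_pattern_def split: if_splits)
  moreover have "card {j. j < l2 * n \<and> F (i div m) (j div n) \<and> A (i mod m) (j mod n) \<noteq> None}
      = card {J. J < l2 \<and> F (i div m) J} * card {j. j < n \<and> A (i mod m) j \<noteq> None}"
    by (rule card_lessThan_mult_div_mod[OF n_pos])
  moreover have "card {J. J < l2 \<and> F (i div m) J} = a1"
    using assms m_pos by (intro card_pattern_row) (simp add: div_less_iff_less_mult)
  ultimately show ?thesis
    by (simp only:)
qed

lemma card_col_kronecker_pattern:
  assumes "j < l2 * n"
  shows "card {i. i < l1 * m \<and> kronecker_pattern F m n A i j \<noteq> None}
       = a2 * card {i. i < m \<and> A i (j mod n) \<noteq> None}"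
proof -
  have "{i. i < l1 * m \<and> kronecker_pattern F m n A i j \<noteq> None}
      = {i. i < l1 * m \<and> F (i div m) (j div n) \<and> A (i mod m) (j mod n) \<noteq> None}"
    by (auto simp: kronecker_pattern_def split: if_splits)
  moreover have "card {i. i < l1 * m \<and> F (i div m) (j div n) \<and> A (i mod m) (j mod n) \<noteq> None}
      = card {I. I < l1 \<and> F I (j div n)} * card {i. i < m \<and> A i (j mod n) \<noteq> None}"
    by (rule card_lessThan_mult_div_mod[OF m_pos])
  moreover have "card {I. I < l1 \<and> F I (j div n)} = a2"
    using assms n_pos by (intro card_pattern_col) (simp add: div_less_iff_less_mult)
  ultimately show ?thesis
    by (simp only:)
qed

lemma card_cells_kronecker_pattern:
  "card {(i, j). i < l1 * m \<and> j < l2 * n \<and> (\<exists>x. kronecker_pattern F m n A i j = Some x \<and> Q x)}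
   = a1 * l1 * card {(i, j). i < m \<and> j < n \<and> (\<exists>x. A i j = Some x \<and> Q x)}"
proof -
  have "{(I, J). I < l1 \<and> J < l2 \<and> F I J} = {(I, J). F I J}"
    using pattern by (auto simp: regular_pattern_def)
  then have card_pattern: "card {(I, J). I < l1 \<and> J < l2 \<and> F I J} = a1 * l1"
    using card_regular_pattern(1)[OF pattern] by (simp only:)
  have "{(i, j). i < l1 * m \<and> j < l2 * n \<and> (\<exists>x. kronecker_pattern F m n A i j = Some x \<and> Q x)}
      = {(i, j). i < l1 * m \<and> j < l2 * n \<and> F (i div m) (j div n) \<and>
           (\<exists>x. A (i mod m) (j mod n) = Some x \<and> Q x)}"
    by (auto simp: kronecker_pattern_def split: if_splits)
  then show ?thesis
    using card_lessThan_mult_div_mod2[OF m_pos n_pos, of l1 l2 F "\<lambda>i j. \<exists>x. A i j = Some x \<and> Q x"]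
    by (simp only: card_pattern)
qed

lemma sum_row_kronecker_pattern:
  assumes "i < l1 * m"
  shows "(\<Sum>j<l2 * n. cellval (kronecker_pattern F m n A) i j) = int a1 * (\<Sum>j<n. cellval A (i mod m) j)"
proof -
  have "(\<Sum>j<l2 * n. cellval (kronecker_pattern F m n A) i j)
      = (\<Sum>J<l2. if F (i div m) J then (\<Sum>j<n. cellval A (i mod m) j) else 0)"
    by (simp add: sum_lessThan_mult_blocks[OF n_pos] kronecker_pattern_def cellval_def if_distrib
        sum.If_cases)
  also have "\<dots> = int (card {J. J < l2 \<and> F (i div m) J}) * (\<Sum>j<n. cellval A (i mod m) j)"
    by (simp add: sum.If_cases Int_def lessThan_def)
  also have "card {J. J < l2 \<and> F (i div m) J} = a1"
    using assms m_pos by (intro card_pattern_row) (simp add: div_less_iff_less_mult)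
  finally show ?thesis .
qed

lemma sum_col_kronecker_pattern:
  assumes "j < l2 * n"
  shows "(\<Sum>i<l1 * m. cellval (kronecker_pattern F m n A) i j) = int a2 * (\<Sum>i<m. cellval A i (j mod n))"
proof -
  have "(\<Sum>i<l1 * m. cellval (kronecker_pattern F m n A) i j)
      = (\<Sum>I<l1. if F I (j div n) then (\<Sum>i<m. cellval A i (j mod n)) else 0)"
    by (simp add: sum_lessThan_mult_blocks[OF m_pos] kronecker_pattern_def cellval_def if_distrib
        sum.If_cases)
  also have "\<dots> = int (card {I. I < l1 \<and> F I (j div n)}) * (\<Sum>i<m. cellval A i (j mod n))"
    by (simp add: sum.If_cases Int_def lessThan_def)
  also have "card {I. I < l1 \<and> F I (j div n)} = a2"
    using assms n_pos by (intro card_pattern_col) (simp add: div_less_iff_less_mult)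
  finally show ?thesis .
qed

lemma heff_v_kronecker_pattern:
  assumes "0 < a1" "0 < l1"
  shows "heff_v (a1 * l1 * lam) t (l2 * n) (a2 * k) = heff_v lam t n k"
proof -
  have double_count: "a1 * l1 = a2 * l2"
    using card_regular_pattern[OF pattern] by simp
  moreover have "0 < a2 * l2"
    unfolding double_count[symmetric] using assms by simp
  ultimately show ?thesis
    using heff_v_inflate[of a2 l2 lam t n k] by simp
qed

lemma heffter_kronecker_pattern:
  assumes a1_pos: "0 < a1" and l1_pos: "0 < l1" and A: "heffter lam t m n s k A"
  shows "heffter (a1 * l1 * lam) t (l1 * m) (l2 * n) (a1 * s) (a2 * k) (kronecker_pattern F m n A)"
proof -
  let ?B = "kronecker_pattern F m n A"
  let ?v = "heff_v lam t n k"
  have double_count: "a1 * l1 = a2 * l2"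
    using card_regular_pattern[OF pattern] by simp
  have v_eq: "heff_v (a1 * l1 * lam) t (l2 * n) (a2 * k) = ?v"
    using a1_pos l1_pos by (rule heff_v_kronecker_pattern)
  have size_eq: "2 * (l2 * n) * (a2 * k) = a1 * l1 * (2 * n * k)"
    by (simp add: double_count ac_simps)
  from A have
    lam_dvd: "lam dvd 2 * n * k" and t_dvd: "t dvd 2 * n * k div lam" and
    rows: "\<forall>i<m. card {j. j < n \<and> A i j \<noteq> None} = s" and
    cols: "\<forall>j<n. card {i. i < m \<and> A i j \<noteq> None} = k" and
    counts: "\<forall>r \<in> {0..<int ?v}.
          card {(i, j). i < m \<and> j < n \<and> (\<exists>x. A i j = Some x \<and> x mod int ?v = r)}
        + card {(i, j). i < m \<and> j < n \<and> (\<exists>x. A i j = Some x \<and> (- x) mod int ?v = r)}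
        = (if int (?v div t) dvd r then 0 else lam)" and
    row_sums: "\<forall>i<m. (\<Sum>j<n. cellval A i j) mod int ?v = 0" and
    col_sums: "\<forall>j<n. (\<Sum>i<m. cellval A i j) mod int ?v = 0"
    unfolding heffter_def Let_def by auto
  show ?thesis
    unfolding heffter_def Let_def v_eq
  proof (intro conjI allI impI ballI)
    show "a1 * l1 * lam dvd 2 * (l2 * n) * (a2 * k)"
      unfolding size_eq using lam_dvd by (simp add: mult_dvd_mono)
    show "t dvd 2 * (l2 * n) * (a2 * k) div (a1 * l1 * lam)"
      unfolding size_eq using t_dvd a1_pos l1_pos by (simp add: mult.assoc)
  next
    fix i j assume "?B i j \<noteq> None"
    then show "i < l1 * m" "j < l2 * n" by (rule kronecker_pattern_filled_bounds)+
  next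
    fix i assume i: "i < l1 * m"
    then show "card {j. j < l2 * n \<and> ?B i j \<noteq> None} = a1 * s"
      using card_row_kronecker_pattern[OF i] rows[rule_format, of "i mod m"] m_pos by simp
  next
    fix j assume j: "j < l2 * n"
    then show "card {i. i < l1 * m \<and> ?B i j \<noteq> None} = a2 * k"
      using card_col_kronecker_pattern[OF j] cols[rule_format, of "j mod n"] n_pos by simp
  next
    fix r assume "r \<in> {0..<int ?v}"
    then show "card {(i, j). i < l1 * m \<and> j < l2 * n \<and> (\<exists>x. ?B i j = Some x \<and> x mod int ?v = r)}
        + card {(i, j). i < l1 * m \<and> j < l2 * n \<and> (\<exists>x. ?B i j = Some x \<and> (- x) mod int ?v = r)}
        = (if int (?v div t) dvd r then 0 else a1 * l1 * lam)"
      using counts by (simp add: card_cells_kronecker_pattern add_mult_distrib2[symmetric])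
  next
    fix i assume "i < l1 * m"
    then show "(\<Sum>j<l2 * n. cellval ?B i j) mod int ?v = 0"
      using row_sums m_pos by (simp add: sum_row_kronecker_pattern mod_mult_right_eq[symmetric])
  next
    fix j assume "j < l2 * n"
    then show "(\<Sum>i<l1 * m. cellval ?B i j) mod int ?v = 0"
      using col_sums n_pos by (simp add: sum_col_kronecker_pattern mod_mult_right_eq[symmetric])
  qed
qed

lemma integer_heffter_kronecker_pattern:
  assumes a1_pos: "0 < a1" and l1_pos: "0 < l1" and A: "integer_heffter lam t m n s k A"
  shows "integer_heffter (a1 * l1 * lam) t (l1 * m) (l2 * n) (a1 * s) (a2 * k) (kronecker_pattern F m n A)"
proof -
  let ?B = "kronecker_pattern F m n A"
  have v_eq: "heff_v (a1 * l1 * lam) t (l2 * n) (a2 * k) = heff_v lam t n k"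
    using a1_pos l1_pos by (rule heff_v_kronecker_pattern)
  from A have H: "heffter lam t m n s k A"
    and entries: "\<forall>i j x. A i j = Some x \<longrightarrow> 1 \<le> \<bar>x\<bar> \<and> \<bar>x\<bar> \<le> int (heff_v lam t n k div 2)"
    and row_sums: "\<forall>i<m. (\<Sum>j<n. cellval A i j) = 0"
    and col_sums: "\<forall>j<n. (\<Sum>i<m. cellval A i j) = 0"
    unfolding integer_heffter_def by auto
  show ?thesis
    unfolding integer_heffter_def v_eq
  proof (intro conjI allI impI)
    show "heffter (a1 * l1 * lam) t (l1 * m) (l2 * n) (a1 * s) (a2 * k) ?B"
      using a1_pos l1_pos H by (rule heffter_kronecker_pattern)
  next
    fix i j x assume "?B i j = Some x"
    then have "A (i mod m) (j mod n) = Some x"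
      by (simp add: kronecker_pattern_def split: if_splits)
    then show "1 \<le> \<bar>x\<bar>" "\<bar>x\<bar> \<le> int (heff_v lam t n k div 2)"
      using entries by blast+
  next
    fix i assume "i < l1 * m"
    then show "(\<Sum>j<l2 * n. cellval ?B i j) = 0"
      using row_sums m_pos by (simp add: sum_row_kronecker_pattern)
  next
    fix j assume "j < l2 * n"
    then show "(\<Sum>i<l1 * m. cellval ?B i j) = 0"
      using col_sums n_pos by (simp add: sum_col_kronecker_pattern)
  qed
qed

end

theorem proposition4:
  fixes m n s k t a1 a2 l1 l2 :: nat
  assumes "0 < m" "0 < n" "0 < s" "0 < k" "0 < t"
    and "0 < a1" "0 < a2" "0 < l1" "0 < l2"
    and "a1 \<le> l2" "a2 \<le> l1" "a1 * l1 = a2 * l2"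
    and "a1 * s \<le> l2 * n" "a2 * k \<le> l1 * m"
  shows "((\<exists>A. heffter 1 t m n s k A) \<longrightarrow>
           (\<exists>B. heffter (a1 * l1) t (l1 * m) (l2 * n) (a1 * s) (a2 * k) B))
       \<and> ((\<exists>A. integer_heffter 1 t m n s k A) \<longrightarrow>
           (\<exists>B. integer_heffter (a1 * l1) t (l1 * m) (l2 * n) (a1 * s) (a2 * k) B))"
proof -
  have pattern: "regular_pattern l1 l2 a1 a2 (cyclic_pattern l1 l2 a1)"
    using \<open>0 < a1\<close> \<open>a1 \<le> l2\<close> \<open>a1 * l1 = a2 * l2\<close> by (rule regular_pattern_cyclic_pattern)
  note kronecker_conditions = pattern \<open>0 < m\<close> \<open>0 < n\<close> \<open>0 < a1\<close> \<open>0 < l1\<close>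
  let ?B = "kronecker_pattern (cyclic_pattern l1 l2 a1) m n"
  show ?thesis
  proof (intro conjI impI)
    assume "\<exists>A. heffter 1 t m n s k A"
    then obtain A where "heffter 1 t m n s k A" ..
    then have "heffter (a1 * l1 * 1) t (l1 * m) (l2 * n) (a1 * s) (a2 * k) (?B A)"
      by (rule heffter_kronecker_pattern[OF kronecker_conditions])
    then show "\<exists>B. heffter (a1 * l1) t (l1 * m) (l2 * n) (a1 * s) (a2 * k) B"
      by auto
  next
    assume "\<exists>A. integer_heffter 1 t m n s k A"
    then obtain A where "integer_heffter 1 t m n s k A" ..
    then have "integer_heffter (a1 * l1 * 1) t (l1 * m) (l2 * n) (a1 * s) (a2 * k) (?B A)"
      by (rule integer_heffter_kronecker_pattern[OF kronecker_conditions])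
    then show "\<exists>B. integer_heffter (a1 * l1) t (l1 * m) (l2 * n) (a1 * s) (a2 * k) B"
      by auto
  qed
qed

end
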